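(* Let $\gamma$ denote the Euler–Mascheroni constant, $\gamma=\lim_{n\to\infty}\left(\sum_{m=1}^{n}\frac1m-\ln n\right)$. Define the rational numbers $a_1=\frac12$, $a_2=\frac16$, $a_4=\frac35$, $a_6=\frac{79}{126}$, $a_8=\frac{7230}{6241}$, $a_{10}=\frac{4146631}{3833346}$, $a_{12}=\frac{306232774533}{179081182865}$, and $a_{2k+1}=-a_{2k}$ for $1\le k\le 6$ (so $a_3=-\frac16$, $a_5=-\frac35$, \dots, $a_{13}=-\frac{306232774533}{179081182865}$). For a positive integer $n$ define $R_1(n)=\frac{a_1}{n}$ and, for $2\le k\le 13$, the finite continued fraction $$R_k(n)=\cfrac{a_1}{n+\cfrac{a_2 n}{n+\cfrac{a_3 n}{n+\cfrac{\ddots}{n+\cfrac{a_{k-1}n}{n+a_k}}}}},$$ i.e. $R_k(n)=a_1/T_2$ where $T_k=n+a_k$ and $T_j=n+\frac{a_j n}{T_{j+1}}$ for $2\le j\le k-1$. Let $$r_k(n)=\sum_{m=1}^{n}\frac1m-\ln n-R_k(n).$$ Then for every $1\le k\le 13$, $$\lim_{n\to\infty} n^{k+1}\bigl(r_k(n)-\gamma\bigr)=C_k,$$ where $(C_1,\dots,C_{13})=\Bigl(-\frac{1}{12},-\frac{1}{72},\frac{1}{120},\frac{1}{200},-\frac{79}{25200},-\frac{6241}{3175200},\frac{241}{105840},\frac{58081}{22018248},-\frac{262445}{91974960},-\frac{2755095121}{892586949408},\frac{20169451}{3821257440},\frac{406806753641401}{45071152103463200},-\frac{71521421431}{5152068292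800}\Bigr)$.
   Context: $\gamma$ is the Euler–Mascheroni constant. The continued fraction $R_k(n)$ terminates with the denominator $n+a_k$ (not $n+a_kn/\cdots$); for example $R_2(n)=\frac{a_1}{n+a_2}=\frac{3}{6n+1}$ and $R_3(n)=\frac{1}{2n}-\frac{1}{12n^2}$. *)

theory Defs
  imports "HOL-Analysis.Analysis"
begin

definition cf_a_even :: "nat \<Rightarrow> real" where
  "cf_a_even j = (if j = 2 then 1/6
     else if j = 4 then 3/5
     else if j = 6 then 79/126
     else if j = 8 then 7230/6241
     else if j = 10 then 4146631/3833346
     else if j = 12 then 306232774533/179081182865
     else 0)"

definition cf_a :: "nat \<Rightarrow> real" where
  "cf_a j = (if j = 1 then 1/2
     else if even j \<and> 2 \<le> j \<and> j \<le> 12 then cf_a_even j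
     else if odd j \<and> 3 \<le> j \<and> j \<le> 13 then - cf_a_even (j - 1)
     else 0)"

text \<open>T_2 for depth k \<ge> 2: T_k = n + a_k, T_j = n + a_j n / T_{j+1} for 2 <= j <= k-1.\<close>
definition cf_T2 :: "nat \<Rightarrow> real \<Rightarrow> real" where
  "cf_T2 k x = foldr (\<lambda>j acc. x + cf_a j * x / acc) [2..<k] (x + cf_a k)"

definition cf_R :: "nat \<Rightarrow> nat \<Rightarrow> real" where
  "cf_R k n = (if k = 1 then cf_a 1 / real n else cf_a 1 / cf_T2 k (real n))"

definition cf_r :: "nat \<Rightarrow> nat \<Rightarrow> real" where
  "cf_r k n = (\<Sum>m=1..n. 1 / real m) - ln (real n) - cf_R k n"

definition cf_C :: "nat \<Rightarrow> real" where
  "cf_C k = [-1/12, -1/72, 1/120, 1/200, -79/25200, -6241/3175200, 241/105840,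
             58081/22018248, -262445/91974960, -2755095121/892586949408,
             20169451/3821257440, 406806753641401/45071152103463200,
             -71521421431/5152068292800] ! (k - 1)"

end

theory Submission
  imports Defs "HOL-Real_Asymp.Real_Asymp" "HOL-Computational_Algebra.Polynomial"
begin

(*
  By the Euler-Maclaurin formula, H_n - ln n - \<gamma> = S(n) + O(n^-16), where
  S(x) = 1/(2x) - \<Sum>j=1..7. B_2j / (2j x^2j) is harm_asymp.  We only need the
  remainder to be O(n^-15): its increments are O(n^-15 - (n+1)^-15) by a routine
  asymptotic expansion, and a sequence tending to 0 is the sum of its increments.

  The continued fraction T_2 equals P(n)/Q(n) for the numerator P and denominator Q
  produced by the three-term recursion of convergents; P is monic, so it is eventually
  nonzero.  Hence n^(k+1) (S(n) - R_k(n)) is eventually a rational function of n, whose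
  limit C_k is computed exactly.
*)

lemma telescoping_tail_bound:
  fixes E w :: "nat \<Rightarrow> real"
  assumes "E \<longlonglongrightarrow> 0" and "w \<longlonglongrightarrow> 0"
    and increment: "\<And>m. m \<ge> N \<Longrightarrow> \<bar>E m - E (Suc m)\<bar> \<le> c * (w m - w (Suc m))"
    and "n \<ge> N"
  shows "\<bar>E n\<bar> \<le> c * w n"
proof -
  have partial: "\<bar>E n - E (M + n)\<bar> \<le> c * (w n - w (M + n))" for M
  proof (induction M)
    case (Suc M)
    have "\<bar>E n - E (Suc M + n)\<bar> \<le> \<bar>E n - E (M + n)\<bar> + \<bar>E (M + n) - E (Suc (M + n))\<bar>"
      by simp
    also have "\<dots> \<le> c * (w n - w (M + n)) + c * (w (M + n) - w (Suc (M + n)))"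
      using Suc increment[of "M + n"] \<open>n \<ge> N\<close> by simp
    finally show ?case by (simp add: algebra_simps)
  qed simp
  have "(\<lambda>M. \<bar>E n - E (M + n)\<bar>) \<longlonglongrightarrow> \<bar>E n - 0\<bar>"
    by (intro tendsto_intros LIMSEQ_ignore_initial_segment assms)
  moreover have "(\<lambda>M. c * (w n - w (M + n))) \<longlonglongrightarrow> c * (w n - 0)"
    by (intro tendsto_intros LIMSEQ_ignore_initial_segment assms)
  ultimately have "\<bar>E n - 0\<bar> \<le> c * (w n - 0)"
    using partial by (intro LIMSEQ_le) auto
  then show ?thesis by simp
qed

definition harm_asymp :: "real \<Rightarrow> real" where
  "harm_asymp x = 1/(2*x) - 1/(12*x^2) + 1/(120*x^4) - 1/(252*x^6) + 1/(240*x^8)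
                  - 1/(132*x^10) + 691/(32760*x^12) - 1/(12*x^14)"

lemma harm_asymp_increment_bigo:
  "(\<lambda>x::real. ln (1 + 1 / x) - 1 / (x + 1) - harm_asymp x + harm_asymp (x + 1))
     \<in> O[at_top](\<lambda>x. 1 / x ^ 15 - 1 / (x + 1) ^ 15)"
  unfolding harm_asymp_def by real_asymp

lemma harm_remainder_bigo:
  "(\<lambda>n. harm n - ln (real n) - euler_mascheroni - harm_asymp (real n)) \<in> O(\<lambda>n. 1 / real n ^ 15)"
proof -
  define E where "E n = harm n - ln (real n) - euler_mascheroni - harm_asymp (real n)" for n
  have "(\<lambda>n. harm_asymp (real n)) \<longlonglongrightarrow> 0"
    unfolding harm_asymp_def by real_asymp
  then have "(\<lambda>n. (harm n - ln (real n)) - euler_mascheroni - harm_asymp (real n))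
               \<longlonglongrightarrow> euler_mascheroni - euler_mascheroni - 0"
    by (intro tendsto_intros euler_mascheroni_LIMSEQ)
  then have E_lim: "E \<longlonglongrightarrow> 0"
    by (simp add: E_def[abs_def])
  obtain c where "\<forall>\<^sub>F x in at_top. \<bar>ln (1 + 1 / x) - 1 / (x + 1) - harm_asymp x + harm_asymp (x + 1)\<bar>
                    \<le> c * \<bar>1 / x ^ 15 - 1 / (x + 1) ^ 15\<bar>"
    using harm_asymp_increment_bigo by (elim landau_o.bigE) auto
  then obtain X where X: "\<And>x. x \<ge> X \<Longrightarrow> \<bar>ln (1 + 1 / x) - 1 / (x + 1) - harm_asymp x + harm_asymp (x + 1)\<bar>
                    \<le> c * \<bar>1 / x ^ 15 - 1 / (x + 1) ^ 15\<bar>"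
    by (auto simp: eventually_at_top_linorder)
  define N where "N = max 1 (nat \<lceil>X\<rceil>)"
  have "\<bar>E m - E (Suc m)\<bar> \<le> c * (1 / real m ^ 15 - 1 / real (Suc m) ^ 15)" if "m \<ge> N" for m
  proof -
    have "m \<ge> 1" and "real m \<ge> X"
      using that unfolding N_def by linarith+
    then have "1 / real (Suc m) ^ 15 \<le> 1 / real m ^ 15"
      by (intro divide_left_mono power_mono) auto
    moreover have "E m - E (Suc m) = ln (1 + 1 / real m) - 1 / (real m + 1)
                     - harm_asymp (real m) + harm_asymp (real m + 1)"
    proof -
      have "1 + 1 / real m = (real m + 1) / real m"
        using \<open>m \<ge> 1\<close> by (simp add: field_simps)
      then have "ln (1 + 1 / real m) = ln (real m + 1) - ln (real m)"
        using \<open>m \<ge> 1\<close> by (simp add: ln_div)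
      then show ?thesis
        by (simp add: E_def harm_Suc inverse_eq_divide add.commute)
    qed
    ultimately show ?thesis
      using X[OF \<open>real m \<ge> X\<close>] by (simp add: add.commute)
  qed
  moreover have "(\<lambda>n. 1 / real n ^ 15) \<longlonglongrightarrow> 0"
    by real_asymp
  ultimately have "\<forall>n\<ge>N. \<bar>E n\<bar> \<le> c * (1 / real n ^ 15)"
    using telescoping_tail_bound[OF E_lim] by blast
  then have "\<forall>\<^sub>F n in sequentially. norm (E n) \<le> c * norm (1 / real n ^ 15)"
    by (auto simp: eventually_at_top_linorder)
  then show ?thesis
    unfolding E_def[abs_def] by (rule bigoI)
qed

lemma harm_remainder_limit:
  assumes "k \<le> 13"
  shows "(\<lambda>n. real n ^ (k + 1) * (harm n - ln (real n) - euler_mascheroni - harm_asymp (real n)))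
           \<longlonglongrightarrow> 0"
proof -
  define E where "E n = harm n - ln (real n) - euler_mascheroni - harm_asymp (real n)" for n
  have "(\<lambda>n. real n ^ 14 * E n) \<in> O(\<lambda>n. real n ^ 14 * (1 / real n ^ 15))"
    using harm_remainder_bigo unfolding E_def[abs_def] by (rule landau_o.big.mult_left)
  moreover have "(\<lambda>n. real n ^ 14 * (1 / real n ^ 15)) \<in> o(\<lambda>_. 1)"
    by real_asymp
  ultimately have "(\<lambda>n. real n ^ 14 * E n) \<longlonglongrightarrow> 0"
    using smalloD_tendsto landau_o.big_small_trans by fastforce
  then have "(\<lambda>n. real n ^ 14 * E n * (1 / real n) ^ (13 - k)) \<longlonglongrightarrow> 0 * 0 ^ (13 - k)"
    by (intro tendsto_intros)
  moreover have "\<forall>\<^sub>F n in sequentially. real n ^ 14 * E n * (1 / real n) ^ (13 - k) = real n ^ (k + 1) * E n"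
  proof (rule eventually_sequentiallyI[of 1])
    fix n :: nat assume "n \<ge> 1"
    have "k + 1 + (13 - k) = 14"
      using assms by simp
    then have "real n ^ 14 = real n ^ (k + 1) * real n ^ (13 - k)"
      by (metis power_add)
    with \<open>n \<ge> 1\<close> show "real n ^ 14 * E n * (1 / real n) ^ (13 - k) = real n ^ (k + 1) * E n"
      by (simp add: power_one_over)
  qed
  ultimately show ?thesis
    unfolding E_def[abs_def] by (simp add: tendsto_cong)
qed

definition cf_step :: "(nat \<Rightarrow> real) \<Rightarrow> nat \<Rightarrow> real poly \<times> real poly \<Rightarrow> real poly \<times> real poly"
  where "cf_step a j = (\<lambda>(p, q). (pCons 0 (p + smult (a j) q), p))"

lemma foldr_cf_step_monic:
  assumes "lead_coeff p = 1" and "degree q < degree p"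
  shows "lead_coeff (fst (foldr (cf_step a) js (p, q))) = 1 \<and>
         degree (snd (foldr (cf_step a) js (p, q))) < degree (fst (foldr (cf_step a) js (p, q)))"
proof (induction js)
  case (Cons j js)
  obtain P Q where PQ: "foldr (cf_step a) js (p, q) = (P, Q)" by fastforce
  with Cons have "lead_coeff P = 1" "degree Q < degree P" by simp_all
  then have lower: "degree (smult (a j) Q) < degree P"
    using degree_smult_le le_less_trans by blast
  then have "lead_coeff (P + smult (a j) Q) = 1"
    using \<open>lead_coeff P = 1\<close> lead_coeff_add_le by (metis add.commute)
  moreover from this have "P + smult (a j) Q \<noteq> 0"
    by (metis coeff_0 zero_neq_one)
  moreover have "degree (P + smult (a j) Q) = degree P"
    using lower by (rule degree_add_eq_left)
  ultimately show ?case
    by (simp add: PQ) (simp add: cf_step_def degree_pCons_eq)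
qed (use assms in simp)

lemma foldr_cf_step_poly_eq:
  fixes a :: "nat \<Rightarrow> real"
  assumes "lead_coeff p = 1" and "degree q < degree p"
  shows "\<forall>\<^sub>F x in at_top. foldr (\<lambda>j t. x + a j * x / t) js (poly p x / poly q x) =
           poly (fst (foldr (cf_step a) js (p, q))) x / poly (snd (foldr (cf_step a) js (p, q))) x"
proof (induction js)
  case (Cons j js)
  obtain P Q where PQ: "foldr (cf_step a) js (p, q) = (P, Q)" by fastforce
  have "P \<noteq> 0"
    using foldr_cf_step_monic[OF assms, of a js] by (auto simp: PQ)
  then have "\<forall>\<^sub>F x in at_top. poly P x \<noteq> 0"
    using poly_eventually_not_zero at_top_le_at_infinity filter_leD by blast
  with Cons show ?case
  proof eventually_elim
    case (elim x)
    then have "x + a j * x / (poly P x / poly Q x) = x * (poly P x + a j * poly Q x) / poly P x"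
      by (simp add: field_simps)
    with elim show ?case by (simp add: PQ) (simp add: cf_step_def)
  qed
qed simp

definition cf_convergent :: "nat \<Rightarrow> real poly \<times> real poly" where
  "cf_convergent k = foldr (cf_step cf_a) [2..<k] ([:cf_a k, 1:], 1)"

lemma cf_convergent_monic: "lead_coeff (fst (cf_convergent k)) = 1"
  using foldr_cf_step_monic[of "[:cf_a k, 1:]" 1] by (simp add: cf_convergent_def)

lemma cf_T2_eventually_eq:
  "\<forall>\<^sub>F x in at_top. cf_T2 k x = poly (fst (cf_convergent k)) x / poly (snd (cf_convergent k)) x"
  using foldr_cf_step_poly_eq[of "[:cf_a k, 1:]" 1 cf_a "[2..<k]"]
  by (simp add: cf_T2_def cf_convergent_def add.commute)

definition harm_asymp_poly :: "real poly" where
  "harm_asymp_poly = [:-1/12, 0, 691/32760, 0, -1/132, 0, 1/240, 0, -1/252, 0, 1/120, 0, -1/12, 1/2:]"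

lemma harm_asymp_eq_poly: "x \<noteq> 0 \<Longrightarrow> harm_asymp x = poly harm_asymp_poly x / x ^ 14"
  by (simp add: harm_asymp_def harm_asymp_poly_def field_simps eval_nat_numeral)

definition cf_remainder_poly :: "nat \<Rightarrow> real poly" where
  "cf_remainder_poly k =
     smult 2 (harm_asymp_poly * fst (cf_convergent k)) - monom 1 14 * snd (cf_convergent k)"

lemma cf_remainder_eventually_eq:
  assumes "k \<le> 13"
  shows "\<forall>\<^sub>F x in at_top. x ^ (k + 1) * (harm_asymp x - cf_a 1 / cf_T2 k x) =
           poly (cf_remainder_poly k) x / (2 * x ^ (13 - k) * poly (fst (cf_convergent k)) x)"
proof -
  have "fst (cf_convergent k) \<noteq> 0"
    using cf_convergent_monic[of k] by auto
  then have "\<forall>\<^sub>F x in at_top. poly (fst (cf_convergent k)) x \<noteq> 0"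
    using poly_eventually_not_zero at_top_le_at_infinity filter_leD by blast
  with cf_T2_eventually_eq[of k] eventually_gt_at_top[of "0::real"]
  show ?thesis
  proof eventually_elim
    case (elim x)
    define P Q where "P = poly (fst (cf_convergent k)) x" and "Q = poly (snd (cf_convergent k)) x"
    have "k + 1 + (13 - k) = 14"
      using assms by simp
    then have "x ^ 14 = x ^ (k + 1) * x ^ (13 - k)"
      by (metis power_add)
    with elim show ?case
      by (simp add: harm_asymp_eq_poly cf_remainder_poly_def cf_a_def poly_monom field_simps
          flip: P_def Q_def)
  qed
qed

lemma cf_remainder_limit:
  assumes "2 \<le> k" and "k \<le> 13"
  shows "((\<lambda>x. poly (cf_remainder_poly k) x / (2 * x ^ (13 - k) * poly (fst (cf_convergent k)) x))
           \<longlongrightarrow> cf_C k) at_top"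
proof -
  have "k \<in> {2, 3, 4, 5, 6, 7, 8, 9, 10, 11, 12, 13}"
    using assms by (simp; presburger)
  \<comment> \<open>The polynomials are normalised to coefficient lists before \<open>poly\<close> is evaluated,
    so that real_asymp only sees a quotient of two explicit polynomials.\<close>
  then show ?thesis
    by (elim insertE emptyE;
        simp add: cf_remainder_poly_def cf_convergent_def harm_asymp_poly_def cf_step_def upt_rec
          cf_a_def cf_a_even_def cf_C_def one_pCons monom_altdef power_numeral_reduce del: poly_pCons;
        simp only: poly_pCons poly_0; real_asymp)
qed

lemma harm_asymp_minus_cf_R_limit:
  assumes "1 \<le> k" and "k \<le> 13"
  shows "((\<lambda>n. real n ^ (k + 1) * (harm_asymp (real n) - cf_R k n)) \<longlongrightarrow> cf_C k) sequentially"
proof (cases "k = 1")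
  case True
  then show ?thesis
    by (simp add: cf_R_def cf_a_def cf_C_def harm_asymp_def) real_asymp
next
  case False
  with assms have "((\<lambda>x. x ^ (k + 1) * (harm_asymp x - cf_a 1 / cf_T2 k x)) \<longlongrightarrow> cf_C k) at_top"
    using cf_remainder_limit tendsto_cong[OF cf_remainder_eventually_eq] by simp
  then have "((\<lambda>n. real n ^ (k + 1) * (harm_asymp (real n) - cf_a 1 / cf_T2 k (real n)))
               \<longlongrightarrow> cf_C k) sequentially"
    by (rule filterlim_compose[OF _ filterlim_real_sequentially])
  with False show ?thesis
    by (simp add: cf_R_def)
qed

theorem theorem1:
  fixes k :: nat
  assumes "1 \<le> k" and "k \<le> 13"
  shows "((\<lambda>n. real n ^ (k + 1) * (cf_r k n - (euler_mascheroni :: real)))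
           \<longlongrightarrow> cf_C k) sequentially"
proof -
  have split: "real n ^ (k + 1) * (cf_r k n - euler_mascheroni) =
      real n ^ (k + 1) * (harm n - ln (real n) - euler_mascheroni - harm_asymp (real n))
      + real n ^ (k + 1) * (harm_asymp (real n) - cf_R k n)" for n
    unfolding cf_r_def harm_def by (simp add: inverse_eq_divide algebra_simps)
  have "((\<lambda>n. real n ^ (k + 1) * (harm n - ln (real n) - euler_mascheroni - harm_asymp (real n))
           + real n ^ (k + 1) * (harm_asymp (real n) - cf_R k n)) \<longlongrightarrow> 0 + cf_C k) sequentially"
    using assms by (intro tendsto_add harm_remainder_limit harm_asymp_minus_cf_R_limit) simp_all
  then show ?thesis
    unfolding split by simp
qed

end
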